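(* For all integers $d\ge 1$ and $1\le p_1\le\cdots\le p_d\le n$ we have $$W_n(p_1,\ldots,p_d)=n^d-q_n(p_1,\ldots,p_d).$$ In particular, for $d=2$ and $1\le p\le q\le n$, $W_n(p,q)=n^2-(n-p+1)^2+(q-p)^2$.
   Context: A $d$-uniform $d$-partite hypergraph $H$ has vertex classes $V_1,\ldots,V_d$ and its edges are $d$-sets containing exactly one vertex from each $V_i$; only such $d$-sets are ever considered as possible edges. $K^d_{p_1,\ldots,p_d}$ is the complete $d$-uniform $d$-partite hypergraph with class sizes $p_1,\ldots,p_d$. A copy of $K^d_{p_1,\ldots,p_d}$ in $H$ is a choice of a permutation $\pi:[d]\to[d]$ and sets $S_i\subseteq V_i$ with $|S_i|=p_{\pi(i)}$ such that every $d$-set with one vertex from each $S_i$ is an edge of $H$ (the class sizes may appear in any order across $V_1,\ldots,V_d$). $H$ is weakly $K^d_{p_1,\ldots,p_d}$-saturated if all $d$-sets with one vertex from each $V_i$ that are not edges of $H$ can be added to $H$ one at a time, in some order, so that each added edge creates a new copy of $K^d_{p_1,\ldots,p_d}$ (i.e., one containing the added edge). $W_n(p_1,\ldots,p_d)$ is the minimum number of edges of a weakly $K^d_{p_1,\ldots,p_d}$-saturated $d$-uniform $d$-partite hypergraph with $n$ vertices in each class. For $x\in[n]^d$, $x_{(i)}$ denotes the $i$-th smallest entry of $x$ when sorted with repetitions; $q_n(p_1,\ldots,p_d)$ is the number of $x\in[n]^d$ with $x_{(i)}\ge p_i$ for all $1\le i\le d$. *)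

theory Defs
  imports "HOL-Library.FuncSet" "HOL-Combinatorics.Permutations"
begin

text \<open>Vertex class i (for i in 1..d) is a copy of {1..n}; a potential edge
(d-set with one vertex per class) is a function in {1..d} ->E {1..n}.
A hypergraph is a set of such functions.\<close>

definition all_edges :: "nat \<Rightarrow> nat \<Rightarrow> (nat \<Rightarrow> nat) set" where
  "all_edges n d = ({1..d} \<rightarrow>\<^sub>E {1..n})"

text \<open>A copy of K^d_{p_1..p_d} in H containing edge e; p is indexed by 1..d.\<close>
definition copy_containing ::
  "nat \<Rightarrow> nat \<Rightarrow> (nat \<Rightarrow> nat) \<Rightarrow> (nat \<Rightarrow> nat) set \<Rightarrow> (nat \<Rightarrow> nat) \<Rightarrow> bool" where
  "copy_containing n d p H e \<longleftrightarrow>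
     (\<exists>\<pi> S. \<pi> permutes {1..d} \<and>
        (\<forall>i\<in>{1..d}. S i \<subseteq> {1..n} \<and> card (S i) = p (\<pi> i)) \<and>
        e \<in> (PiE {1..d} S) \<and> (PiE {1..d} S) \<subseteq> H)"

definition weakly_saturated ::
  "nat \<Rightarrow> nat \<Rightarrow> (nat \<Rightarrow> nat) \<Rightarrow> (nat \<Rightarrow> nat) set \<Rightarrow> bool" where
  "weakly_saturated n d p H \<longleftrightarrow>
     H \<subseteq> all_edges n d \<and>
     (\<exists>es. distinct es \<and> set es = all_edges n d - H \<and>
        (\<forall>k<length es. copy_containing n d p (H \<union> set (take (Suc k) es)) (es ! k)))"

definition W :: "nat \<Rightarrow> nat \<Rightarrow> (nat \<Rightarrow> nat) \<Rightarrow> nat" where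
  "W n d p = Min (card ` {H. weakly_saturated n d p H})"

text \<open>x_(i): i-th smallest entry (1-indexed) of x, with repetitions.\<close>
definition ord_stat :: "nat \<Rightarrow> (nat \<Rightarrow> nat) \<Rightarrow> nat \<Rightarrow> nat" where
  "ord_stat d x i = sort (map x [1..<d+1]) ! (i - 1)"

definition q :: "nat \<Rightarrow> nat \<Rightarrow> (nat \<Rightarrow> nat) \<Rightarrow> nat" where
  "q n d p = card {x \<in> ({1..d} \<rightarrow>\<^sub>E {1..n}). \<forall>i\<in>{1..d}. ord_stat d x i \<ge> p i}"

end

theory Submission
  imports Defs "HOL-Library.Function_Algebras" "HOL-Computational_Algebra.Polynomial"
begin

text \<open>
  Write Q for the set of edges x with x_(i) \<ge> p_i for all i (\<open>q_set\<close> below); an edge lies in Q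
  iff it dominates some permutation of p coordinatewise.

  Upper bound: the complement of Q is weakly saturated. Add the edges of Q in order of increasing
  coordinate sum: an edge e \<in> Q with e_j \<ge> p_(\<pi> j) is a corner of the copy with classes
  {1..<p_(\<pi> j)} \<union> {e_j}, all of whose other edges lie coordinatewise below e, so they are outside Q
  or were added before e.

  Lower bound: let \<phi> be a real function on the edges that vanishes on a weakly saturated H and is
  orthogonal to every monomial \<Pi>_j x_j^(y_j - 1) with y \<in> Q. Following the saturation order, \<phi>
  vanishes at each added edge e: if \<phi> already vanishes on the rest of a copy \<Pi>_j S_j containing e,
  use the polynomial \<Pi>_j x_j^(|S_j| - 1) \<Pi>_(s \<notin> S_j) (x_j - s). It is a combination of monomials
  indexed by Q, vanishes on every edge outside the copy and does not vanish at e. Hence \<phi> = 0, so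
  the point evaluations at H together with the monomials of Q span the n^d-dimensional space of
  functions on edges, and |H| + |Q| \<ge> n^d.
\<close>

lemma mono_on_if_le_Suc:
  fixes p :: "nat \<Rightarrow> 'a::preorder"
  assumes le_Suc: "\<forall>i\<in>{1..<d}. p i \<le> p (i + 1)"
  shows "mono_on {1..d} p"
proof (rule mono_onI)
  fix i j :: nat
  assume i: "i \<in> {1..d}" and "j \<in> {1..d}" "i \<le> j"
  from \<open>i \<le> j\<close> show "p i \<le> p j" using \<open>j \<in> {1..d}\<close>
  proof (induction j rule: dec_induct)
    case base
    then show ?case by simp
  next
    case (step k)
    then have "p i \<le> p k" and "k \<in> {1..<d}" using i by auto
    then show ?case using le_Suc by (metis Suc_eq_plus1 order_trans)
  qed
qed

lemma finite_all_edges: "finite (all_edges n d)"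
  by (simp add: all_edges_def finite_PiE)

lemma card_all_edges: "card (all_edges n d) = n ^ d"
  by (simp add: all_edges_def card_PiE)

subsection \<open>Order statistics and permutations\<close>

lemma card_le_ord_stat:
  assumes "i \<in> {1..d}"
  shows "i \<le> card {j\<in>{1..d}. x j \<le> ord_stat d x i}"
proof -
  define xs where "xs = map x [1..<d+1]"
  define v where "v = ord_stat d x i"
  have len: "length (sort xs) = d" by (simp add: xs_def)
  have v: "v = sort xs ! (i - 1)" by (simp add: v_def xs_def ord_stat_def)
  have "\<forall>a\<in>set (take i (sort xs)). a \<le> v"
  proof
    fix a assume "a \<in> set (take i (sort xs))"
    then obtain k where "k < i" "a = sort xs ! k"
      using len assms by (auto simp: in_set_conv_nth)
    then show "a \<le> v" using len assms by (simp add: v sorted_nth_mono)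
  qed
  then have "i = length (filter (\<lambda>a. a \<le> v) (take i (sort xs)))"
    using assms len by simp
  also have "\<dots> \<le> length (filter (\<lambda>a. a \<le> v) (sort xs))"
    by (metis append_take_drop_id filter_append le_add1 length_append)
  also have "\<dots> = length (filter (\<lambda>a. a \<le> v) xs)"
    by (metis mset_filter mset_sort size_mset)
  also have "\<dots> = length (filter (\<lambda>j. x j \<le> v) [1..<d+1])"
    by (simp add: xs_def filter_map o_def)
  also have "\<dots> = card {j\<in>{1..d}. x j \<le> v}"
    by (subst distinct_length_filter) (auto intro: arg_cong[where f = card])
  finally show ?thesis by (simp add: v_def)
qed

lemma ord_stat_sorting_permutation:
  obtains s where "s permutes {1..d}" "\<forall>i\<in>{1..d}. ord_stat d x i = x (s i)"
proof -
  define idx where "idx = sort_key x [1..<d+1]"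
  have mset_idx: "mset idx = mset [1..<d+1]" by (simp add: idx_def)
  then have dist: "distinct idx" and set_idx: "set idx = {1..d}" and len: "length idx = d"
    by (metis distinct_upt mset_eq_imp_distinct_iff,
        metis atLeastLessThanSuc_atLeastAtMost set_mset_mset set_upt Suc_eq_plus1,
        metis length_upt size_mset diff_add_inverse2)
  have sorted_eq: "sort (map x [1..<d+1]) = map x idx"
    unfolding idx_def by (rule properties_for_sort) (auto simp: mset_idx[unfolded idx_def])
  define s where "s i = (if i \<in> {1..d} then idx ! (i - 1) else i)" for i
  have "bij_betw ((!) idx \<circ> (\<lambda>i. i - 1)) {1..d} {1..d}"
  proof (rule bij_betw_trans)
    show "bij_betw (\<lambda>i. i - 1) {1..d} {..<d}"
      by (rule bij_betw_byWitness[where f' = Suc]) auto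
    show "bij_betw ((!) idx) {..<d} {1..d}"
      using bij_betw_nth[OF dist] len set_idx by auto
  qed
  then have "bij_betw s {1..d} {1..d}"
    by (rule bij_betw_cong[THEN iffD1, rotated]) (simp add: s_def)
  then have "s permutes {1..d}"
    by (rule bij_imp_permutes) (auto simp: s_def)
  moreover have "ord_stat d x i = x (s i)" if "i \<in> {1..d}" for i
    unfolding ord_stat_def sorted_eq using that len by (subst nth_map) (auto simp: s_def)
  ultimately show thesis using that by blast
qed

lemma le_ord_stat_imp_permutation_le:
  assumes "\<forall>i\<in>{1..d}. p i \<le> ord_stat d x i"
  obtains \<pi> where "\<pi> permutes {1..d}" "\<forall>j\<in>{1..d}. p (\<pi> j) \<le> x j"
proof -
  obtain s where s: "s permutes {1..d}" "\<forall>i\<in>{1..d}. ord_stat d x i = x (s i)"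
    by (rule ord_stat_sorting_permutation)
  have below: "p (inv s j) \<le> x j" if j: "j \<in> {1..d}" for j
  proof -
    have "inv s j \<in> {1..d}" using permutes_in_image[OF permutes_inv[OF s(1)]] j by simp
    then have "p (inv s j) \<le> x (s (inv s j))" using assms s(2) by simp
    then show ?thesis using permutes_inverses(1)[OF s(1)] by simp
  qed
  show thesis by (rule that[OF permutes_inv[OF s(1)]]) (simp add: below)
qed

lemma permutation_le_imp_le_ord_stat:
  assumes mono: "mono_on {1..d} p" and \<pi>: "\<pi> permutes {1..d}"
    and le: "\<forall>j\<in>{1..d}. p (\<pi> j) \<le> x j" and i: "i \<in> {1..d}"
  shows "p i \<le> ord_stat d x i"
proof (rule ccontr)
  \<comment> \<open>Pigeonhole: at least i coordinates are \<open>\<le> x_(i)\<close>, but \<pi> maps them injectively into {1..<i}.\<close>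
  define J where "J = {j\<in>{1..d}. x j \<le> ord_stat d x i}"
  assume small: "\<not> p i \<le> ord_stat d x i"
  have "\<pi> ` J \<subseteq> {1..<i}"
  proof
    fix k assume "k \<in> \<pi> ` J"
    then obtain j where j: "j \<in> {1..d}" "x j \<le> ord_stat d x i" "k = \<pi> j"
      by (auto simp: J_def)
    have k: "k \<in> {1..d}" using permutes_in_image[OF \<pi>] j by simp
    have "p k \<le> x j" using le j by simp
    also have "\<dots> < p i" using j small by simp
    finally have "k < i" using mono_onD[OF mono i k] by (meson not_le)
    then show "k \<in> {1..<i}" using k by simp
  qed
  then have "card (\<pi> ` J) \<le> card {1..<i}" by (meson card_mono finite_atLeastLessThan)
  then have "card J \<le> card {1..<i}"
    using card_image[OF permutes_inj_on[OF \<pi>]] by simp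
  also have "\<dots> < i" using i by simp
  finally show False using card_le_ord_stat[OF i, of x] by (simp add: J_def)
qed

subsection \<open>The upper bound\<close>

definition q_set :: "nat \<Rightarrow> nat \<Rightarrow> (nat \<Rightarrow> nat) \<Rightarrow> (nat \<Rightarrow> nat) set" where
  "q_set n d p = {x \<in> all_edges n d. \<forall>i\<in>{1..d}. p i \<le> ord_stat d x i}"

lemma card_q_set: "card (q_set n d p) = q n d p"
  by (simp add: q_set_def q_def all_edges_def)

lemma q_set_subset_all_edges: "q_set n d p \<subseteq> all_edges n d"
  by (auto simp: q_set_def)

lemma finite_q_set: "finite (q_set n d p)"
  using finite_subset[OF q_set_subset_all_edges finite_all_edges] .

lemma q_set_edge_is_top_corner_of_copy:
  assumes pos: "\<forall>i\<in>{1..d}. 1 \<le> p i" and e: "e \<in> q_set n d p"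
  obtains \<pi> S where "\<pi> permutes {1..d}" "\<forall>j\<in>{1..d}. S j \<subseteq> {1..n} \<and> card (S j) = p (\<pi> j)"
    "e \<in> PiE {1..d} S" "\<forall>y\<in>PiE {1..d} S. \<forall>j\<in>{1..d}. y j \<le> e j"
proof -
  have eE: "e \<in> {1..d} \<rightarrow>\<^sub>E {1..n}" using e by (simp add: q_set_def all_edges_def)
  obtain \<pi> where \<pi>: "\<pi> permutes {1..d}" "\<forall>j\<in>{1..d}. p (\<pi> j) \<le> e j"
    using e le_ord_stat_imp_permutation_le unfolding q_set_def by blast
  define S where "S j = insert (e j) {1..<p (\<pi> j)}" for j
  show thesis
  proof (rule that[OF \<pi>(1)])
    show "\<forall>j\<in>{1..d}. S j \<subseteq> {1..n} \<and> card (S j) = p (\<pi> j)"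
    proof
      fix j assume j: "j \<in> {1..d}"
      have "1 \<le> p (\<pi> j)" using pos permutes_in_image[OF \<pi>(1)] j by auto
      moreover have "p (\<pi> j) \<le> e j" "e j \<in> {1..n}" using \<pi>(2) eE j by (auto simp: PiE_iff)
      ultimately show "S j \<subseteq> {1..n} \<and> card (S j) = p (\<pi> j)" by (auto simp: S_def)
    qed
    show "e \<in> PiE {1..d} S" using eE by (auto simp: S_def PiE_iff)
    show "\<forall>y\<in>PiE {1..d} S. \<forall>j\<in>{1..d}. y j \<le> e j"
    proof (intro ballI)
      fix y j assume "y \<in> PiE {1..d} S" "j \<in> {1..d}"
      then have "y j \<in> S j" "p (\<pi> j) \<le> e j" using \<pi>(2) by (auto simp: PiE_iff)
      then show "y j \<le> e j" by (auto simp: S_def)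
    qed
  qed
qed

lemma sum_less_sum_if_le_extensional:
  fixes y z :: "'a \<Rightarrow> 'b::ordered_cancel_comm_monoid_add"
  assumes "finite A" "y \<in> extensional A" "z \<in> extensional A" "y \<noteq> z" "\<forall>j\<in>A. y j \<le> z j"
  shows "(\<Sum>j\<in>A. y j) < (\<Sum>j\<in>A. z j)"
proof (rule sum_strict_mono_ex1)
  obtain j where "j \<in> A" "y j \<noteq> z j" using assms(2-4) extensionalityI by blast
  then show "\<exists>j\<in>A. y j < z j" using assms(5) order_less_le by blast
qed (use assms in simp_all)

lemma in_set_take_if_key_less:
  assumes "sorted (map f xs)" "k < length xs" "y \<in> set xs" "f y < f (xs ! k)"
  shows "y \<in> set (take k xs)"
proof -
  obtain m where m: "m < length xs" "y = xs ! m" using assms(3) by (metis in_set_conv_nth)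
  have "m < k"
    using sorted_nth_mono[OF assms(1), of k m] m assms(2,4) by (metis length_map not_le nth_map leD)
  then show ?thesis using m by (metis in_set_conv_nth length_take min_less_iff_conj nth_take)
qed

lemma weakly_saturated_complement_q_set:
  assumes pos: "\<forall>i\<in>{1..d}. 1 \<le> p i"
  shows "weakly_saturated n d p (all_edges n d - q_set n d p)"
proof -
  let ?E = "all_edges n d" and ?Q = "q_set n d p"
  define weight where "weight x = (\<Sum>j\<in>{1..d}. x j)" for x :: "nat \<Rightarrow> nat"
  obtain xs where xs: "distinct xs" "set xs = ?Q"
    using finite_distinct_list[OF finite_q_set] by blast
  define es where "es = sort_key weight xs"
  have es: "distinct es" "set es = ?Q" "sorted (map weight es)"
    using xs by (simp_all add: es_def)
  have "copy_containing n d p ((?E - ?Q) \<union> set (take (Suc k) es)) (es ! k)"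
    if k: "k < length es" for k
  proof -
    let ?e = "es ! k"
    obtain \<pi> S where \<pi>: "\<pi> permutes {1..d}"
      and S: "\<forall>j\<in>{1..d}. S j \<subseteq> {1..n} \<and> card (S j) = p (\<pi> j)"
      and e: "?e \<in> PiE {1..d} S" and below: "\<forall>y\<in>PiE {1..d} S. \<forall>j\<in>{1..d}. y j \<le> ?e j"
      using q_set_edge_is_top_corner_of_copy[OF pos] k es(2) nth_mem by metis
    have "y \<in> (?E - ?Q) \<union> set (take (Suc k) es)" if y: "y \<in> PiE {1..d} S" for y
    proof -
      have yE: "y \<in> ?E" using y S by (force simp: all_edges_def PiE_iff)
      consider "y = ?e" | "y \<notin> ?Q" | "y \<in> ?Q" "y \<noteq> ?e" by blast
      then show ?thesis
      proof cases
        case 1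
        then show ?thesis using k by (simp add: take_Suc_conv_app_nth)
      next
        case 2
        then show ?thesis using yE by blast
      next
        case 3
        have "weight y < weight ?e"
          unfolding weight_def using below y e 3
          by (intro sum_less_sum_if_le_extensional) (auto simp: PiE_iff)
        moreover have "y \<in> set es" using 3 es(2) by simp
        ultimately have "y \<in> set (take k es)" using in_set_take_if_key_less[OF es(3) k] by simp
        then show ?thesis using k by (simp add: take_Suc_conv_app_nth)
      qed
    qed
    then show ?thesis unfolding copy_containing_def using \<pi> S e by blast
  qed
  moreover have "set es = ?E - (?E - ?Q)" using es(2) q_set_subset_all_edges by blast
  ultimately show ?thesis
    unfolding weakly_saturated_def using es(1) by (intro conjI exI[of _ es]) auto
qed

subsection \<open>Linear algebra\<close>

lemma sum_fun_apply: "(\<Sum>x\<in>A. f x) c = (\<Sum>x\<in>A. f x c)"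
  by (induction A rule: infinite_finite_induct) auto

lemma inj_on_if_rows_independent:
  fixes w :: "'a \<Rightarrow> 'c \<Rightarrow> real"
  assumes finA: "finite A"
    and independent: "\<And>\<phi>. (\<And>c. (\<Sum>x\<in>A. \<phi> x * w x c) = 0) \<Longrightarrow> \<forall>x\<in>A. \<phi> x = 0"
  shows "inj_on w A"
proof
  fix x y assume xy: "x \<in> A" "y \<in> A" "w x = w y"
  show "x = y"
  proof (rule ccontr)
    assume "x \<noteq> y"
    define \<phi> where "\<phi> z = (if z = x then 1 else if z = y then -1 else 0 :: real)" for z
    have "(\<Sum>z\<in>A. \<phi> z * w z c) = (\<Sum>z\<in>{x, y}. \<phi> z * w z c)" for c
      using xy finA by (intro sum.mono_neutral_right) (auto simp: \<phi>_def)
    also have "\<dots> c = 0" for c using \<open>x \<noteq> y\<close> xy by (simp add: \<phi>_def)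
    finally have "\<phi> x = 0" using independent xy by blast
    then show False by (simp add: \<phi>_def)
  qed
qed

lemma card_le_card_if_rows_independent:
  fixes v :: "'a \<Rightarrow> 'c \<Rightarrow> real"
  assumes finA: "finite A" and finB: "finite B"
    and independent: "\<And>\<phi>. (\<And>c. c \<in> B \<Longrightarrow> (\<Sum>x\<in>A. \<phi> x * v x c) = 0) \<Longrightarrow> \<forall>x\<in>A. \<phi> x = 0"
  shows "card A \<le> card B"
proof -
  interpret F: vector_space "\<lambda>(r::real) (f::'c \<Rightarrow> real) c. r * f c"
    by unfold_locales (auto simp: fun_eq_iff algebra_simps)
  define row where "row x c = (if c \<in> B then v x c else 0)" for x c
  define basis where "basis b c = (if c = b then 1 else 0 :: real)" for b c :: 'c
  have row_independent: "\<forall>x\<in>A. \<phi> x = 0" if "\<And>c. (\<Sum>x\<in>A. \<phi> x * row x c) = 0" for \<phi>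
  proof (rule independent)
    fix c assume "c \<in> B"
    then show "(\<Sum>x\<in>A. \<phi> x * v x c) = 0" using that[of c] by (simp add: row_def)
  qed
  have inj: "inj_on row A" using finA row_independent by (rule inj_on_if_rows_independent)
  have "F.independent (row ` A)"
  proof (rule F.independent_if_scalars_zero)
    fix f u assume sum0: "(\<Sum>w\<in>row ` A. (\<lambda>c. f w * w c)) = 0" and u: "u \<in> row ` A"
    have "(\<Sum>x\<in>A. f (row x) * row x c) = 0" for c
      using fun_cong[OF sum0, of c] by (simp add: sum_fun_apply sum.reindex[OF inj])
    then show "f u = 0" using row_independent[of "f \<circ> row"] u by auto
  qed (use finA in simp)
  moreover have "row ` A \<subseteq> F.span (basis ` B)"
  proof
    fix u assume "u \<in> row ` A"
    then obtain x where "u = row x" by blast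
    also have "row x = (\<Sum>b\<in>B. (\<lambda>c. v x b * basis b c))"
    proof
      fix c
      have "(\<Sum>b\<in>B. v x b * basis b c) = (\<Sum>b\<in>B. if b = c then v x b else 0)"
        by (intro sum.cong) (auto simp: basis_def)
      then show "row x c = (\<Sum>b\<in>B. (\<lambda>c. v x b * basis b c)) c"
        using finB by (simp add: sum_fun_apply row_def sum.delta)
    qed
    also have "\<dots> \<in> F.span (basis ` B)"
      by (intro F.span_sum F.span_scale F.span_base) auto
    finally show "u \<in> F.span (basis ` B)" .
  qed
  ultimately have "card (row ` A) \<le> card (basis ` B)"
    using F.independent_span_bound finB by blast
  also have "\<dots> \<le> card B" using finB by (rule card_image_le)
  finally show ?thesis using card_image[OF inj] by simp
qed

subsection \<open>The lower bound\<close>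

lemma power_times_prod_diff_expansion:
  fixes T :: "nat set"
  assumes "finite T" "1 \<le> c"
  obtains a where
    "\<And>t::real. t ^ (c - 1) * (\<Prod>s\<in>T. t - real s) = (\<Sum>k\<in>{c..c + card T}. a k * t ^ (k - 1))"
proof -
  define P where "P = (\<Prod>s\<in>T. [:- real s, 1:])"
  have deg: "degree P \<le> card T"
    using degree_prod_sum_le[OF assms(1), of "\<lambda>s. [:- real s, 1:]"] by (simp add: P_def)
  have prod: "(\<Prod>s\<in>T. t - real s) = (\<Sum>i\<le>card T. coeff P i * t ^ i)" for t :: real
  proof -
    have "(\<Prod>s\<in>T. t - real s) = poly P t" by (simp add: P_def poly_prod)
    also have "\<dots> = (\<Sum>i\<le>degree P. coeff P i * t ^ i)" by (rule poly_altdef)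
    also have "\<dots> = (\<Sum>i\<le>card T. coeff P i * t ^ i)"
      using deg by (intro sum.mono_neutral_left) (auto simp: coeff_eq_0)
    finally show ?thesis .
  qed
  have "t ^ (c - 1) * (\<Prod>s\<in>T. t - real s) = (\<Sum>k\<in>{c..c + card T}. coeff P (k - c) * t ^ (k - 1))"
    for t :: real
  proof -
    have "t ^ (c - 1) * (\<Prod>s\<in>T. t - real s) = (\<Sum>i\<in>{0..card T}. coeff P i * t ^ (i + c - 1))"
      using assms(2) by (simp add: prod sum_distrib_left atMost_atLeast0 power_add[symmetric] algebra_simps)
    also have "\<dots> = (\<Sum>k\<in>{0 + c..card T + c}. coeff P (k - c) * t ^ (k - 1))"
      by (subst sum.shift_bounds_cl_nat_ivl) simp
    finally show ?thesis by (simp add: add.commute)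
  qed
  then show thesis by (rule that)
qed

definition edge_monomial :: "nat \<Rightarrow> (nat \<Rightarrow> nat) \<Rightarrow> (nat \<Rightarrow> nat) \<Rightarrow> real" where
  "edge_monomial d y x = (\<Prod>j\<in>{1..d}. real (x j) ^ (y j - 1))"

text \<open>The power of x_j lifts every exponent of x_j to at least |S_j| - 1; for a copy, where
  |S_j| = p_(\<pi> j), all monomials that occur are therefore indexed by \<open>q_set\<close>.\<close>

definition box_polynomial :: "nat \<Rightarrow> nat \<Rightarrow> (nat \<Rightarrow> nat set) \<Rightarrow> (nat \<Rightarrow> nat) \<Rightarrow> real" where
  "box_polynomial n d S x =
     (\<Prod>j\<in>{1..d}. real (x j) ^ (card (S j) - 1) * (\<Prod>s\<in>{1..n} - S j. real (x j) - real s))"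

lemma box_polynomial_expansion:
  assumes S: "\<forall>j\<in>{1..d}. S j \<subseteq> {1..n} \<and> 1 \<le> card (S j)"
  obtains A where "\<And>x. box_polynomial n d S x =
    (\<Sum>y\<in>PiE {1..d} (\<lambda>j. {card (S j)..n}). A y * edge_monomial d y x)"
proof -
  have "\<exists>a. \<forall>t::real. t ^ (card (S j) - 1) * (\<Prod>s\<in>{1..n} - S j. t - real s) =
                       (\<Sum>k\<in>{card (S j)..n}. a k * t ^ (k - 1))" if j: "j \<in> {1..d}" for j
  proof -
    have sub: "S j \<subseteq> {1..n}" and "1 \<le> card (S j)" using S j by auto
    then obtain a where a: "\<And>t::real. t ^ (card (S j) - 1) * (\<Prod>s\<in>{1..n} - S j. t - real s) =
        (\<Sum>k\<in>{card (S j)..card (S j) + card ({1..n} - S j)}. a k * t ^ (k - 1))"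
      using power_times_prod_diff_expansion[of "{1..n} - S j" "card (S j)"] by blast
    have "card (S j) \<le> n" using card_mono[OF _ sub] by simp
    then have "card (S j) + card ({1..n} - S j) = n"
      using sub finite_subset[OF sub] by (simp add: card_Diff_subset)
    then show ?thesis using a by auto
  qed
  then obtain a where a: "\<And>j t. j \<in> {1..d} \<Longrightarrow> t ^ (card (S j) - 1) * (\<Prod>s\<in>{1..n} - S j. t - real s) =
                       (\<Sum>k\<in>{card (S j)..n}. a j k * t ^ (k - 1))"
    by metis
  have "box_polynomial n d S x =
    (\<Sum>y\<in>PiE {1..d} (\<lambda>j. {card (S j)..n}). (\<Prod>j\<in>{1..d}. a j (y j)) * edge_monomial d y x)" for x
  proof -
    have "box_polynomial n d S x = (\<Prod>j\<in>{1..d}. \<Sum>k\<in>{card (S j)..n}. a j k * real (x j) ^ (k - 1))"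
      unfolding box_polynomial_def using a by (intro prod.cong) auto
    also have "\<dots> = (\<Sum>y\<in>PiE {1..d} (\<lambda>j. {card (S j)..n}). \<Prod>j\<in>{1..d}. a j (y j) * real (x j) ^ (y j - 1))"
      by (rule prod_sum_PiE) auto
    finally show ?thesis by (simp add: edge_monomial_def prod.distrib)
  qed
  then show thesis by (rule that)
qed

lemma box_polynomial_eq_0_iff:
  assumes "x \<in> all_edges n d"
  shows "box_polynomial n d S x = 0 \<longleftrightarrow> x \<notin> PiE {1..d} S"
proof -
  have x: "x \<in> extensional {1..d}" "\<forall>j\<in>{1..d}. x j \<in> {1..n}"
    using assms by (auto simp: all_edges_def PiE_iff)
  then have "box_polynomial n d S x = 0 \<longleftrightarrow> (\<exists>j\<in>{1..d}. x j \<notin> S j)"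
    by (auto simp: box_polynomial_def)
  also have "\<dots> \<longleftrightarrow> x \<notin> PiE {1..d} S" using x(1) by (auto simp: PiE_iff)
  finally show ?thesis .
qed

lemma annihilator_vanishes_at_copy_edge:
  fixes \<phi> :: "(nat \<Rightarrow> nat) \<Rightarrow> real"
  assumes mono: "mono_on {1..d} p"
    and annihil: "\<forall>y\<in>q_set n d p. (\<Sum>x\<in>all_edges n d. \<phi> x * edge_monomial d y x) = 0"
    and \<pi>: "\<pi> permutes {1..d}" and S: "\<forall>j\<in>{1..d}. S j \<subseteq> {1..n} \<and> card (S j) = p (\<pi> j)"
    and e: "e \<in> PiE {1..d} S" and zero: "\<forall>x\<in>PiE {1..d} S - {e}. \<phi> x = 0"
  shows "\<phi> e = 0"
proof -
  let ?E = "all_edges n d" and ?Y = "PiE {1..d} (\<lambda>j. {card (S j)..n})"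
  have card_pos: "1 \<le> card (S j)" if j: "j \<in> {1..d}" for j
  proof -
    have "finite (S j)" using S j by (meson finite_atLeastAtMost finite_subset)
    moreover have "S j \<noteq> {}" using PiE_mem[OF e j] by auto
    ultimately show ?thesis by (simp add: Suc_le_eq card_gt_0_iff)
  qed
  then have "\<forall>j\<in>{1..d}. S j \<subseteq> {1..n} \<and> 1 \<le> card (S j)" using S by blast
  then obtain A where A: "\<And>x. box_polynomial n d S x = (\<Sum>y\<in>?Y. A y * edge_monomial d y x)"
    by (rule box_polynomial_expansion) blast
  have Y: "?Y \<subseteq> q_set n d p"
  proof
    fix y assume y: "y \<in> ?Y"
    then have "y \<in> ?E" using y card_pos by (force simp: all_edges_def PiE_iff)
    moreover have "\<forall>j\<in>{1..d}. p (\<pi> j) \<le> y j" using y S by (auto simp: PiE_iff)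
    ultimately show "y \<in> q_set n d p"
      using permutation_le_imp_le_ord_stat[OF mono \<pi>] by (simp add: q_set_def)
  qed
  have eE: "e \<in> ?E" using e S by (force simp: all_edges_def PiE_iff)
  have "\<phi> x * box_polynomial n d S x = 0" if "x \<in> ?E - {e}" for x
    using that zero box_polynomial_eq_0_iff[of x n d S] by auto
  then have "\<phi> e * box_polynomial n d S e = (\<Sum>x\<in>?E. \<phi> x * box_polynomial n d S x)"
    using eE by (subst sum.mono_neutral_right[OF finite_all_edges, of "{e}"]) auto
  also have "\<dots> = (\<Sum>y\<in>?Y. A y * (\<Sum>x\<in>?E. \<phi> x * edge_monomial d y x))"
    unfolding A sum_distrib_left by (subst sum.swap) (simp add: mult.left_commute)
  also have "\<dots> = 0" using annihil Y by (intro sum.neutral) auto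
  finally have "\<phi> e * box_polynomial n d S e = 0" .
  moreover have "box_polynomial n d S e \<noteq> 0" using box_polynomial_eq_0_iff[OF eE] e by simp
  ultimately show ?thesis by simp
qed

lemma annihilator_vanishes_if_weakly_saturated:
  fixes \<phi> :: "(nat \<Rightarrow> nat) \<Rightarrow> real"
  assumes mono: "mono_on {1..d} p" and ws: "weakly_saturated n d p H"
    and annihil: "\<forall>y\<in>q_set n d p. (\<Sum>x\<in>all_edges n d. \<phi> x * edge_monomial d y x) = 0"
    and H: "\<forall>h\<in>H. \<phi> h = 0"
  shows "\<forall>x\<in>all_edges n d. \<phi> x = 0"
proof -
  obtain es where es: "set es = all_edges n d - H"
    and copies: "\<And>k. k < length es \<Longrightarrow> copy_containing n d p (H \<union> set (take (Suc k) es)) (es ! k)"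
    using ws unfolding weakly_saturated_def by blast
  have "\<forall>x\<in>set (take k es). \<phi> x = 0" if "k \<le> length es" for k
    using that
  proof (induction k)
    case 0
    then show ?case by simp
  next
    case (Suc k)
    then have k: "k < length es" and IH: "\<forall>x\<in>set (take k es). \<phi> x = 0" by simp_all
    have take: "take (Suc k) es = take k es @ [es ! k]" using k by (simp add: take_Suc_conv_app_nth)
    obtain \<pi> S where \<pi>: "\<pi> permutes {1..d}" and S: "\<forall>j\<in>{1..d}. S j \<subseteq> {1..n} \<and> card (S j) = p (\<pi> j)"
      and e: "es ! k \<in> PiE {1..d} S" and box: "PiE {1..d} S \<subseteq> H \<union> set (take (Suc k) es)"
      using copies[OF k] unfolding copy_containing_def by blast
    have "\<forall>x\<in>PiE {1..d} S - {es ! k}. \<phi> x = 0" using box IH H unfolding take by auto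
    then have "\<phi> (es ! k) = 0" by (rule annihilator_vanishes_at_copy_edge[OF mono annihil \<pi> S e])
    with IH show ?case unfolding take by simp
  qed
  from this[of "length es"] es H show ?thesis by auto
qed

lemma card_weakly_saturated_ge:
  assumes mono: "mono_on {1..d} p" and ws: "weakly_saturated n d p H"
  shows "n ^ d \<le> card H + q n d p"
proof -
  let ?E = "all_edges n d" and ?Q = "q_set n d p"
  have HE: "H \<subseteq> ?E" using ws by (simp add: weakly_saturated_def)
  define v where "v x c = (case c of Inl y \<Rightarrow> edge_monomial d y x | Inr h \<Rightarrow> of_bool (h = x))"
    for x c
  have "card ?E \<le> card (Inl ` ?Q \<union> Inr ` H)"
  proof (rule card_le_card_if_rows_independent[where v = v])
    show "finite ?E" "finite (Inl ` ?Q \<union> Inr ` H)"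
      using finite_all_edges finite_q_set finite_subset[OF HE] by auto
    fix \<phi> assume \<phi>: "\<And>c. c \<in> Inl ` ?Q \<union> Inr ` H \<Longrightarrow> (\<Sum>x\<in>?E. \<phi> x * v x c) = 0"
    have "\<forall>y\<in>?Q. (\<Sum>x\<in>?E. \<phi> x * edge_monomial d y x) = 0"
    proof
      fix y assume "y \<in> ?Q"
      then show "(\<Sum>x\<in>?E. \<phi> x * edge_monomial d y x) = 0" using \<phi>[of "Inl y"] by (simp add: v_def)
    qed
    moreover have "\<forall>h\<in>H. \<phi> h = 0"
    proof
      fix h assume h: "h \<in> H"
      have "(\<Sum>x\<in>?E. \<phi> x * v x (Inr h)) = (\<Sum>x\<in>?E. if h = x then \<phi> x else 0)"
        by (intro sum.cong) (auto simp: v_def)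
      also have "\<dots> = \<phi> h" using h HE finite_all_edges by (auto simp: sum.delta)
      finally show "\<phi> h = 0" using \<phi>[of "Inr h"] h by simp
    qed
    ultimately show "\<forall>x\<in>?E. \<phi> x = 0" by (rule annihilator_vanishes_if_weakly_saturated[OF mono ws])
  qed
  also have "\<dots> \<le> card ?Q + card H"
    using card_Un_le[of "Inl ` ?Q" "Inr ` H"] by (simp add: card_image)
  finally show ?thesis by (simp add: card_all_edges card_q_set)
qed

subsection \<open>The saturation number\<close>

lemma q_le: "q n d p \<le> n ^ d"
  by (metis card_q_set card_all_edges card_mono finite_all_edges q_set_subset_all_edges)

lemma W_eq:
  assumes mono: "mono_on {1..d} p" and pos: "\<forall>i\<in>{1..d}. 1 \<le> p i"
  shows "W n d p = n ^ d - q n d p"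
proof -
  let ?S = "{H. weakly_saturated n d p H}" and ?H = "all_edges n d - q_set n d p"
  have "?S \<subseteq> Pow (all_edges n d)" by (auto simp: weakly_saturated_def)
  then have fin: "finite (card ` ?S)" using finite_all_edges by (meson finite_Pow_iff finite_subset finite_imageI)
  have H: "?H \<in> ?S" using weakly_saturated_complement_q_set[OF pos] by simp
  have "card ?H = n ^ d - q n d p"
    by (simp add: card_Diff_subset finite_q_set q_set_subset_all_edges card_all_edges card_q_set)
  then have "W n d p \<le> n ^ d - q n d p" unfolding W_def using fin H by (metis Min_le imageI)
  moreover have "W n d p \<in> card ` ?S" unfolding W_def using fin H by (intro Min_in) auto
  then have "n ^ d \<le> W n d p + q n d p" using card_weakly_saturated_ge[OF mono] by auto
  ultimately show ?thesis by linarith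
qed

lemma ord_stat_2: "ord_stat 2 x 1 = min (x 1) (x 2)" "ord_stat 2 x 2 = max (x 1) (x 2)"
  by (simp_all add: ord_stat_def numeral_2_eq_2 upt_rec)

lemma q_set_2:
  assumes "1 \<le> a" "a \<le> b"
  shows "q_set n 2 (\<lambda>i. if i = 1 then a else b) = PiE {1..2} (\<lambda>_. {a..n}) - PiE {1..2} (\<lambda>_. {a..<b})"
proof (rule set_eqI)
  fix x :: "nat \<Rightarrow> nat"
  have two: "{1..2::nat} = {1, 2}" by auto
  have PiE_2: "x \<in> PiE {1..2} S \<longleftrightarrow> x \<in> extensional {1, 2} \<and> x 1 \<in> S 1 \<and> x 2 \<in> S 2" for S
    unfolding two by (auto simp: PiE_iff)
  have "x \<in> q_set n 2 (\<lambda>i. if i = 1 then a else b) \<longleftrightarrow>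
      x \<in> PiE {1..2} (\<lambda>_. {1..n}) \<and> a \<le> ord_stat 2 x 1 \<and> b \<le> ord_stat 2 x 2"
    unfolding q_set_def all_edges_def two by simp
  also have "\<dots> \<longleftrightarrow> x \<in> extensional {1, 2} \<and> x 1 \<in> {1..n} \<and> x 2 \<in> {1..n}
      \<and> a \<le> min (x 1) (x 2) \<and> b \<le> max (x 1) (x 2)"
    unfolding PiE_2 ord_stat_2 by simp
  also have "\<dots> \<longleftrightarrow> x \<in> extensional {1, 2} \<and> x 1 \<in> {a..n} \<and> x 2 \<in> {a..n}
      \<and> \<not> (x 1 \<in> {a..<b} \<and> x 2 \<in> {a..<b})"
    using assms by (auto simp: min_def max_def)
  also have "\<dots> \<longleftrightarrow> x \<in> PiE {1..2} (\<lambda>_. {a..n}) - PiE {1..2} (\<lambda>_. {a..<b})"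
    unfolding Diff_iff PiE_2 by blast
  finally show "x \<in> q_set n 2 (\<lambda>i. if i = 1 then a else b) \<longleftrightarrow> \<dots>" .
qed

lemma q_2:
  assumes "1 \<le> a" "a \<le> b" "b \<le> n"
  shows "q n 2 (\<lambda>i. if i = 1 then a else b) = (n + 1 - a) ^ 2 - (b - a) ^ 2"
proof -
  have sub: "PiE {1..2} (\<lambda>_. {a..<b}) \<subseteq> PiE {1..2::nat} (\<lambda>_. {a..n})"
    using assms by (intro PiE_mono) auto
  have "q n 2 (\<lambda>i. if i = 1 then a else b) =
      card (PiE {1..2::nat} (\<lambda>_. {a..n}) - PiE {1..2} (\<lambda>_. {a..<b}))"
    unfolding card_q_set[symmetric] q_set_2[OF assms(1,2)] ..
  also have "\<dots> = (n + 1 - a) ^ 2 - (b - a) ^ 2"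
    using sub by (simp add: card_Diff_subset finite_PiE card_PiE)
  finally show ?thesis .
qed

theorem theorem2:
  shows "(\<forall>(n::nat) (d::nat) (p::nat \<Rightarrow> nat).
            d \<ge> 1 \<and> 1 \<le> p 1 \<and> (\<forall>i\<in>{1..<d}. p i \<le> p (i+1)) \<and> p d \<le> n \<longrightarrow>
            int (W n d p) = int n ^ d - int (q n d p))
       \<and> (\<forall>(n::nat) (a::nat) (b::nat). 1 \<le> a \<and> a \<le> b \<and> b \<le> n \<longrightarrow>
            int (W n 2 (\<lambda>i. if i = 1 then a else b)) =
              int n ^ 2 - (int n - int a + 1) ^ 2 + (int b - int a) ^ 2)"
proof (intro conjI allI impI)
  fix n d :: nat and p :: "nat \<Rightarrow> nat"
  assume h: "d \<ge> 1 \<and> 1 \<le> p 1 \<and> (\<forall>i\<in>{1..<d}. p i \<le> p (i+1)) \<and> p d \<le> n"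
  then have mono: "mono_on {1..d} p" by (intro mono_on_if_le_Suc) blast
  have "\<forall>i\<in>{1..d}. 1 \<le> p i"
  proof
    fix i assume "i \<in> {1..d}"
    then have "p 1 \<le> p i" using mono_onD[OF mono, of 1 i] h by auto
    then show "1 \<le> p i" using h by simp
  qed
  then show "int (W n d p) = int n ^ d - int (q n d p)"
    using W_eq[OF mono] q_le by (simp add: of_nat_diff)
next
  fix n a b :: nat
  assume h: "1 \<le> a \<and> a \<le> b \<and> b \<le> n"
  let ?p = "\<lambda>i::nat. if i = 1 then a else b"
  have "mono_on {1..2} ?p" "\<forall>i\<in>{1..2}. 1 \<le> ?p i" using h by (auto intro: mono_onI)
  then have "W n 2 ?p = n ^ 2 - ((n + 1 - a) ^ 2 - (b - a) ^ 2)" using W_eq q_2 h by simp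
  moreover have "(b - a) ^ 2 \<le> (n + 1 - a) ^ 2" "(n + 1 - a) ^ 2 \<le> n ^ 2"
    using h by (auto intro!: power_mono)
  ultimately have "W n 2 ?p + (n + 1 - a) ^ 2 = n ^ 2 + (b - a) ^ 2" by linarith
  then have "int (W n 2 ?p) + int (n + 1 - a) ^ 2 = int n ^ 2 + int (b - a) ^ 2"
    by (metis of_nat_add of_nat_power)
  moreover have "int (n + 1 - a) = int n - int a + 1" "int (b - a) = int b - int a" using h by auto
  ultimately show "int (W n 2 ?p) = int n ^ 2 - (int n - int a + 1) ^ 2 + (int b - int a) ^ 2"
    by (simp only:)
qed

end
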